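(* Let $N$ be a Poisson process on $[0,\infty)$ with intensity $\lambda>0$, with points $0<X_1<X_2<\cdots$, and let $\epsilon>0$, $L>0$. For every positive integer $m$, $$\mathbb{E}[\beta_0(L)^m]=\sum_{k=1}^m \left\{ m \atop k\right\}\left(\frac{L}{\epsilon}-k\right)^k\left(\lambda\epsilon e^{-\epsilon\lambda}\right)^k\mathbf{1}_{\{L/\epsilon>k\}}.$$
   Context: A cluster is a maximal set of consecutive points $X_j,\dots,X_k$ with $X_{l+1}-X_l\le\epsilon$ for $j\le l<k$; its end is $X_k+\epsilon$. $\beta_0(L)$ is the number of clusters whose end is $\le L$ (number of complete clusters in $[0,L]$). $\left\{ m \atop k\right\}$ denotes the Stirling number of the second kind (number of partitions of an $m$-element set into $k$ nonempty blocks). *)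

theory Defs
  imports "HOL-Probability.Probability" "HOL-Combinatorics.Stirling"
begin

text \<open>Points of the process are X 1 < X 2 < ... (index 0 is unused, X 0 = 0).
  A cluster is a maximal block of consecutive indices j..k (j \<ge> 1) with all
  consecutive gaps \<le> eps; its end is X k + eps.\<close>

definition is_cluster :: "(nat \<Rightarrow> real) \<Rightarrow> real \<Rightarrow> nat \<Rightarrow> nat \<Rightarrow> bool" where
  "is_cluster X eps j k \<longleftrightarrow>
     1 \<le> j \<and> j \<le> k \<and>
     (\<forall>l. j \<le> l \<and> l < k \<longrightarrow> X (l + 1) - X l \<le> eps) \<and>
     (j = 1 \<or> X j - X (j - 1) > eps) \<and>
     X (k + 1) - X k > eps"

definition beta0 :: "(nat \<Rightarrow> real) \<Rightarrow> real \<Rightarrow> real \<Rightarrow> nat" where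
  "beta0 X eps L = card {(j, k). is_cluster X eps j k \<and> X k + eps \<le> L}"

definition poisson_points :: "'a measure \<Rightarrow> real \<Rightarrow> (nat \<Rightarrow> 'a \<Rightarrow> real) \<Rightarrow> bool" where
  "poisson_points M lam X \<longleftrightarrow>
     (\<exists>T :: nat \<Rightarrow> 'a \<Rightarrow> real.
        prob_space.indep_vars M (\<lambda>_. borel) T UNIV \<and>
        (\<forall>i. distributed M lborel (T i) (exponential_density lam)) \<and>
        (\<forall>n \<omega>. X n \<omega> = (\<Sum>i<n. T i \<omega>)))"

end

theory Submission
  imports Defs
begin

text \<open>Write the points as partial sums X n = T 0 + ... + T (n - 1) of i.i.d. Exp(lam) gaps.
  A complete cluster of [0, L] ends at X k exactly when T k > eps and X k + eps \<le> L, so beta0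
  counts such indices k. Since x ^ m = \<Sum>r. S(m, r) r! C(x, r), it suffices to compute the factorial
  moments E C(beta0, r), the expected numbers of r-sets of such indices. For an r-set with largest
  element k + 1, memorylessness strips eps off each of its r long gaps, so its probability is
  exp (- r lam eps) P(X (k + 1) \<le> L - r eps). Summing over the C(k, r - 1) such sets and over k
  turns these Erlang distribution functions into the r-th factorial moment (lam (L - r eps)) ^ r / r!
  of a Poisson variable.\<close>

section \<open>Memorylessness of exponential gaps\<close>

lemma measure_exponential_shift:
  fixes l eps c t :: real
  assumes l: "0 < l" and eps: "0 \<le> eps" and c: "c \<in> {0, 1}"
  shows "measure (density lborel (exponential_density l)) {y. eps < y \<and> c * y \<le> t}
       = exp (- l * eps) * measure (density lborel (exponential_density l)) {y. c * y \<le> t - c * eps}"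
proof -
  let ?D = "density lborel (exponential_density l)"
  interpret D: prob_space ?D
    using prob_space_exponential_density[OF l] .
  have CDF: "measure ?D {..a} = (if 0 \<le> a then 1 - exp (- l * a) else 0)" for a
  proof -
    have "ennreal (measure ?D {..a}) = ennreal (erlang_CDF 0 l a)"
      using emeasure_erlang_density[OF l, of 0 a] by (simp add: D.emeasure_eq_measure)
    then have "measure ?D {..a} = erlang_CDF 0 l a"
      by (subst (asm) ennreal_inj) (auto simp: erlang_CDF_nonneg[OF l])
    then show ?thesis
      by (simp add: erlang_CDF_0)
  qed
  show ?thesis
  proof (cases "c = 0")
    case True
    have "{y. eps < y \<and> c * y \<le> t} = (if 0 \<le> t then space ?D - {..eps} else {})"
      using True by auto
    then show ?thesis
      using True CDF[of eps] eps D.prob_compl[of "{..eps}"] D.prob_space by simp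
  next
    case False
    with c have c1: "c = 1" by simp
    show ?thesis
    proof (cases "eps \<le> t")
      case True
      have "measure ?D {y. eps < y \<and> c * y \<le> t} = measure ?D ({..t} - {..eps})"
        using c1 by (intro arg_cong[where f="measure ?D"]) auto
      also have "\<dots> = exp (- l * eps) - exp (- l * t)"
        using True eps CDF[of t] CDF[of eps] by (simp add: D.finite_measure_Diff')
      also have "\<dots> = exp (- l * eps) * (1 - exp (- l * (t - eps)))"
        by (simp add: algebra_simps flip: exp_add)
      also have "\<dots> = exp (- l * eps) * measure ?D {y. c * y \<le> t - c * eps}"
        using CDF[of "t - eps"] True c1 by (simp add: atMost_def)
      finally show ?thesis .
    next
      case False
      then have "{y. eps < y \<and> c * y \<le> t} = {}" "{y. c * y \<le> t - c * eps} = {..t - eps}"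
        using c1 by auto
      then show ?thesis
        using CDF[of "t - eps"] False by (simp only:) simp
    qed
  qed
qed

lemma (in prob_space) emeasure_indep_var_pair:
  assumes ind: "indep_var N1 V N W"
    and Q: "{p \<in> space (N1 \<Otimes>\<^sub>M N). Q p} \<in> sets (N1 \<Otimes>\<^sub>M N)"
  shows "emeasure M {\<omega> \<in> space M. Q (V \<omega>, W \<omega>)} =
         (\<integral>\<^sup>+w. emeasure (distr M N1 V) {y \<in> space N1. Q (y, w)} \<partial>distr M N W)"
proof -
  have rv: "random_variable N1 V" "random_variable N W"
    and eq: "distr M N1 V \<Otimes>\<^sub>M distr M N W = distr M (N1 \<Otimes>\<^sub>M N) (\<lambda>x. (V x, W x))"
    using ind unfolding indep_var_distribution_eq by auto
  have VW: "(\<lambda>x. (V x, W x)) \<in> measurable M (N1 \<Otimes>\<^sub>M N)" using rv by measurable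
  interpret DV: prob_space "distr M N1 V" using rv by (simp add: prob_space_distr)
  interpret DW: prob_space "distr M N W" using rv by (simp add: prob_space_distr)
  interpret P: pair_sigma_finite "distr M N1 V" "distr M N W" ..
  have sets_eq: "sets (distr M N1 V \<Otimes>\<^sub>M distr M N W) = sets (N1 \<Otimes>\<^sub>M N)"
    by (rule sets_pair_measure_cong) simp_all
  have "emeasure M {\<omega> \<in> space M. Q (V \<omega>, W \<omega>)} =
      emeasure (distr M (N1 \<Otimes>\<^sub>M N) (\<lambda>x. (V x, W x))) {p \<in> space (N1 \<Otimes>\<^sub>M N). Q p}"
    using measurable_space[OF VW] by (subst emeasure_distr[OF VW Q]) (auto intro: arg_cong[where f="emeasure M"])
  also have "\<dots> = (\<integral>\<^sup>+w. emeasure (distr M N1 V) ((\<lambda>y. (y, w)) -` {p \<in> space (N1 \<Otimes>\<^sub>M N). Q p}) \<partial>distr M N W)"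
    unfolding eq[symmetric] by (rule P.emeasure_pair_measure_alt2) (use Q sets_eq in simp)
  also have "\<dots> = (\<integral>\<^sup>+w. emeasure (distr M N1 V) {y \<in> space N1. Q (y, w)} \<partial>distr M N W)"
    by (intro nn_integral_cong arg_cong[where f="emeasure (distr M N1 V)"])
       (auto simp: space_pair_measure)
  finally show ?thesis .
qed

text \<open>Memorylessness of an exponential variable Y = g (V) independent of W: conditioning on
  Y > eps shifts Y by eps. The factor c \<in> {0, 1} records whether Y enters the constraint.\<close>
lemma (in prob_space) prob_indep_exponential_shift:
  assumes ind: "indep_var N1 V N W"
    and g[measurable]: "g \<in> borel_measurable N1"
    and Y: "distributed M lborel (\<lambda>\<omega>. g (V \<omega>)) (exponential_density l)"
    and l: "0 < l" and eps: "0 \<le> eps" and c: "c \<in> {0, 1}"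
    and phi[measurable]: "\<phi> \<in> borel_measurable N" and P[measurable]: "Measurable.pred N P"
  shows "prob {\<omega> \<in> space M. eps < g (V \<omega>) \<and> c * g (V \<omega>) + \<phi> (W \<omega>) \<le> s \<and> P (W \<omega>)} =
         exp (- l * eps) * prob {\<omega> \<in> space M. c * g (V \<omega>) + \<phi> (W \<omega>) \<le> s - c * eps \<and> P (W \<omega>)}"
proof -
  have [measurable]: "V \<in> measurable M N1" "W \<in> measurable M N"
    using ind unfolding indep_var_distribution_eq by auto
  let ?D = "density lborel (exponential_density l)"
  interpret D: prob_space ?D using prob_space_exponential_density[OF l] .
  have distr_Y: "distr M borel (\<lambda>\<omega>. g (V \<omega>)) = ?D"
    using distributed_distr_eq_density[OF Y] by (metis distr_cong sets_lborel)
  have distr_V: "emeasure (distr M N1 V) {y \<in> space N1. R (g y)} = emeasure ?D {y. R y}"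
    if [measurable]: "Measurable.pred borel R" for R
  proof -
    have "emeasure (distr M N1 V) {y \<in> space N1. R (g y)} = emeasure M ((\<lambda>\<omega>. g (V \<omega>)) -` {y. R y} \<inter> space M)"
      using measurable_space[of V M N1]
      by (subst emeasure_distr) (auto intro!: arg_cong[where f="emeasure M"])
    also have "\<dots> = emeasure ?D {y. R y}"
      by (subst distr_Y[symmetric], subst emeasure_distr) auto
    finally show ?thesis .
  qed
  have fubini: "emeasure M {\<omega> \<in> space M. R (g (V \<omega>)) (W \<omega>)} = (\<integral>\<^sup>+w. emeasure ?D {y. R y w} \<partial>distr M N W)"
    if [measurable]: "Measurable.pred (borel \<Otimes>\<^sub>M N) (\<lambda>(y, w). R y w)" for R
  proof -
    have "emeasure M {\<omega> \<in> space M. R (g (V \<omega>)) (W \<omega>)} =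
        (\<integral>\<^sup>+w. emeasure (distr M N1 V) {y \<in> space N1. R (g y) w} \<partial>distr M N W)"
      using emeasure_indep_var_pair[OF ind, where Q="\<lambda>(y, w). R (g y) w"] by simp
    also have "\<dots> = (\<integral>\<^sup>+w. emeasure ?D {y. R y w} \<partial>distr M N W)"
      by (intro nn_integral_cong distr_V) measurable
    finally show ?thesis .
  qed
  have shift: "emeasure ?D {y. eps < y \<and> c * y + \<phi> w \<le> s \<and> P w} =
      ennreal (exp (- l * eps)) * emeasure ?D {y. c * y + \<phi> w \<le> s - c * eps \<and> P w}" for w
  proof (cases "P w")
    case True
    then show ?thesis
      using measure_exponential_shift[OF l eps c, of "s - \<phi> w"]
      by (simp add: D.emeasure_eq_measure ennreal_mult' algebra_simps)
  qed simp
  have "emeasure M {\<omega> \<in> space M. eps < g (V \<omega>) \<and> c * g (V \<omega>) + \<phi> (W \<omega>) \<le> s \<and> P (W \<omega>)} =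
      (\<integral>\<^sup>+w. emeasure ?D {y. eps < y \<and> c * y + \<phi> w \<le> s \<and> P w} \<partial>distr M N W)"
    by (rule fubini[of "\<lambda>y w. eps < y \<and> c * y + \<phi> w \<le> s \<and> P w"]) measurable
  also have "\<dots> = ennreal (exp (- l * eps)) *
      (\<integral>\<^sup>+w. emeasure ?D {y. c * y + \<phi> w \<le> s - c * eps \<and> P w} \<partial>distr M N W)"
    by (simp add: shift nn_integral_cmult)
  also have "\<dots> = ennreal (exp (- l * eps)) *
      emeasure M {\<omega> \<in> space M. c * g (V \<omega>) + \<phi> (W \<omega>) \<le> s - c * eps \<and> P (W \<omega>)}"
    by (subst fubini[of "\<lambda>y w. c * y + \<phi> w \<le> s - c * eps \<and> P w"]) measurable
  finally show ?thesis
    by (simp add: emeasure_eq_measure ennreal_mult'[symmetric])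
qed

locale exponential_gaps = prob_space M for M :: "'a measure" +
  fixes T :: "nat \<Rightarrow> 'a \<Rightarrow> real" and lam :: real
  assumes indep_T: "indep_vars (\<lambda>_. borel) T UNIV"
    and distributed_T: "\<And>i. distributed M lborel (T i) (exponential_density lam)"
    and lam_pos: "0 < lam"
begin

lemma measurable_T [measurable]: "T i \<in> borel_measurable M"
  using distributed_measurable[OF distributed_T[of i]] by simp

lemma AE_T_pos: "AE \<omega> in M. \<forall>i. 0 < T i \<omega>"
proof (subst AE_all_countable, intro allI)
  fix i
  have "prob {\<omega> \<in> space M. T i \<omega> \<le> 0} = 0"
    using exponential_distributedD_le[OF distributed_T[of i] _ lam_pos, of 0] by simp
  then have "AE \<omega> in M. \<omega> \<notin> {\<omega> \<in> space M. T i \<omega> \<le> 0}"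
    by (subst (asm) prob_eq_0) measurable
  then show "AE \<omega> in M. 0 < T i \<omega>"
    using AE_space by eventually_elim auto
qed

lemma prob_sum_T_le: "prob {\<omega> \<in> space M. (\<Sum>i<Suc k. T i \<omega>) \<le> a} = erlang_CDF k lam a"
proof -
  have D: "distributed M lborel (\<lambda>\<omega>. \<Sum>i<Suc k. T i \<omega>) (erlang_density k lam)"
    using exponential_distributed_sum[of "{..<Suc k}" lam T]
    by (auto intro: indep_vars_subset[OF indep_T] distributed_T lam_pos)
  have "emeasure M {\<omega> \<in> space M. (\<Sum>i<Suc k. T i \<omega>) \<le> a} =
      emeasure (distr M lborel (\<lambda>\<omega>. \<Sum>i<Suc k. T i \<omega>)) {..a}"
    by (subst emeasure_distr) (auto intro!: arg_cong[where f="emeasure M"])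
  also have "\<dots> = erlang_CDF k lam a"
    unfolding distributed_distr_eq_density[OF D] by (rule emeasure_erlang_density[OF lam_pos])
  finally show ?thesis
    by (simp add: emeasure_eq_measure erlang_CDF_nonneg[OF lam_pos])
qed

lemma prob_gaps_gt_sum_le:
  assumes eps: "0 \<le> eps" and A: "finite A" and J: "finite J"
  shows "prob {\<omega> \<in> space M. (\<forall>a\<in>A. eps < T a \<omega>) \<and> (\<Sum>i\<in>J. T i \<omega>) \<le> s} =
     exp (- lam * eps) ^ card A * prob {\<omega> \<in> space M. (\<Sum>i\<in>J. T i \<omega>) \<le> s - real (card (A \<inter> J)) * eps}"
  using A
proof (induction A arbitrary: s rule: finite_induct)
  case empty
  then show ?case by simp
next
  case (insert a A)
  let ?V = "\<lambda>\<omega>. restrict (\<lambda>i. T i \<omega>) {a}"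
  let ?W = "\<lambda>\<omega>. restrict (\<lambda>i. T i \<omega>) (UNIV - {a})"
  let ?N = "PiM (UNIV - {a}) (\<lambda>_. borel) :: (nat \<Rightarrow> real) measure"
  let ?c = "if a \<in> J then 1 else 0 :: real"
  let ?\<phi> = "\<lambda>w. \<Sum>i\<in>J - {a}. w i"
  let ?P = "\<lambda>w. \<forall>b\<in>A. eps < w b"
  have ind: "indep_var (PiM {a} (\<lambda>_. borel)) ?V ?N ?W"
    by (rule indep_var_restrict[OF indep_T]) auto
  have component: "(\<lambda>w. w i) \<in> borel_measurable ?N" if "i \<noteq> a" for i
    using that by (intro measurable_component_singleton) auto
  have "?\<phi> \<in> borel_measurable ?N"
    using component by (intro borel_measurable_sum) auto
  moreover have "Measurable.pred ?N ?P"
  proof (intro pred_intros_finite(3)[OF insert.hyps(1)])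
    fix b assume "b \<in> A"
    then have [measurable]: "(\<lambda>w. w b) \<in> borel_measurable ?N"
      using insert.hyps(2) by (intro component) auto
    show "Measurable.pred ?N (\<lambda>w. eps < w b)" by measurable
  qed
  moreover have "(\<Sum>i\<in>J. T i \<omega>) = ?c * T a \<omega> + ?\<phi> (?W \<omega>)" for \<omega>
    using J by (cases "a \<in> J") (auto simp: sum.remove intro!: sum.cong)
  moreover have "?P (?W \<omega>) \<longleftrightarrow> (\<forall>b\<in>A. eps < T b \<omega>)" for \<omega>
    using insert.hyps(2) by auto
  ultimately have "prob {\<omega> \<in> space M. (\<forall>b\<in>insert a A. eps < T b \<omega>) \<and> (\<Sum>i\<in>J. T i \<omega>) \<le> s} =
     exp (- lam * eps) * prob {\<omega> \<in> space M. (\<forall>b\<in>A. eps < T b \<omega>) \<and> (\<Sum>i\<in>J. T i \<omega>) \<le> s - ?c * eps}"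
    using prob_indep_exponential_shift[OF ind _ _ lam_pos eps, of "\<lambda>w. w a" ?c ?\<phi> ?P s]
      distributed_T[of a]
    by (simp add: measurable_component_singleton conj_commute conj_left_commute)
  also have "\<dots> = exp (- lam * eps) ^ card (insert a A) *
      prob {\<omega> \<in> space M. (\<Sum>i\<in>J. T i \<omega>) \<le> s - real (card (insert a A \<inter> J)) * eps}"
  proof -
    have "real (card (insert a A \<inter> J)) = ?c + real (card (A \<inter> J))"
      using insert.hyps J by (auto simp: Int_insert_left)
    then show ?thesis
      unfolding insert.IH using insert.hyps by (simp add: algebra_simps)
  qed
  finally show ?case .
qed

end

section \<open>Poisson tails and counting identities\<close>

lemma suminf_commute_ennreal:
  fixes f :: "nat \<Rightarrow> nat \<Rightarrow> ennreal"
  shows "(\<Sum>k. \<Sum>j. f k j) = (\<Sum>j. \<Sum>k. f k j)"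
proof -
  have "(\<Sum>k. \<Sum>j. f k j) = (\<Sum>k. \<integral>\<^sup>+j. f k j \<partial>count_space UNIV)"
    by (simp add: nn_integral_count_space_nat)
  also have "\<dots> = (\<integral>\<^sup>+j. (\<Sum>k. f k j) \<partial>count_space UNIV)"
    by (rule nn_integral_suminf[symmetric]) simp
  also have "\<dots> = (\<Sum>j. \<Sum>k. f k j)"
    by (simp add: nn_integral_count_space_nat)
  finally show ?thesis .
qed

lemma poisson_sums: "(\<lambda>j. x ^ j * exp (- x) / fact j) sums (1 :: real)"
  using sums_mult[OF exp_converges[of x], of "exp (- x)"]
  by (simp add: exp_minus field_simps)

lemma erlang_CDF_sums_poisson_tail:
  assumes "0 \<le> t"
  shows "(\<lambda>j. if k < j then (l * t) ^ j * exp (- (l * t)) / fact j else 0) sums erlang_CDF k l t"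
proof -
  let ?p = "\<lambda>j. (l * t) ^ j * exp (- (l * t)) / fact j"
  have "(\<lambda>j. ?p j - (if j \<in> {..k} then ?p j else 0)) sums (1 - (\<Sum>j\<le>k. ?p j))"
    by (intro sums_diff poisson_sums sums_If_finite_set) simp
  moreover have "(\<lambda>j. ?p j - (if j \<in> {..k} then ?p j else 0)) = (\<lambda>j. if k < j then ?p j else 0)"
    by auto
  ultimately show ?thesis
    using assms by (simp add: erlang_CDF_def)
qed

lemma poisson_choose_sums:
  "(\<lambda>j. x ^ j * exp (- x) / fact j * real (j choose r)) sums (x ^ r / fact r :: real)"
proof -
  let ?g = "\<lambda>j. x ^ j * exp (- x) / fact j * real (j choose r)"
  have shifted: "?g (i + r) = x ^ r / fact r * (exp (- x) * (x ^ i /\<^sub>R fact i))" for i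
  proof -
    have "real (fact r * fact i * ((i + r) choose r)) = real (fact (i + r))"
      using binomial_fact_lemma[of r "i + r"] by simp
    then have fact_eq: "fact (i + r) = fact r * fact i * real ((i + r) choose r)"
      by simp
    have "real ((i + r) choose r) \<noteq> 0"
      by simp
    then show ?thesis
      unfolding fact_eq by (simp add: power_add field_simps)
  qed
  have "(\<lambda>i. ?g (i + r)) sums (x ^ r / fact r * (exp (- x) * exp x))"
    unfolding shifted by (intro sums_mult exp_converges)
  then have "(\<lambda>i. ?g (i + r)) sums (x ^ r / fact r)"
    by (simp add: exp_minus)
  moreover have "(\<Sum>i<r. ?g i) = 0"
    by (simp add: binomial_eq_0)
  ultimately show ?thesis
    using sums_iff_shift[of ?g r] by simp
qed

lemma sum_lessThan_choose: "(\<Sum>k<j. k choose q) = j choose Suc q"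
  by (cases j) (simp_all add: lessThan_Suc_atMost sum_choose_upper)

text \<open>Probabilistically: erlang_CDF k l t = P(N > k) for N Poisson with mean l t, and
  summing C(k, q) over k < N gives C(N, q + 1).\<close>
lemma suminf_choose_erlang_CDF:
  assumes l: "0 < l" and t: "0 \<le> t"
  shows "(\<Sum>k. ennreal (real (k choose q) * erlang_CDF k l t)) = ennreal ((l * t) ^ Suc q / fact (Suc q))"
proof -
  let ?p = "\<lambda>j. (l * t) ^ j * exp (- (l * t)) / fact j"
  have p: "0 \<le> ?p j" for j
    using l t by simp
  have "(\<Sum>k. ennreal (real (k choose q) * erlang_CDF k l t)) =
      (\<Sum>k. \<Sum>j. ennreal (real (k choose q) * (if k < j then ?p j else 0)))"
    using p by (subst suminf_ennreal_eq[OF _ sums_mult[OF erlang_CDF_sums_poisson_tail[OF t]]]) auto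
  also have "\<dots> = (\<Sum>j. \<Sum>k. ennreal (real (k choose q) * (if k < j then ?p j else 0)))"
    by (rule suminf_commute_ennreal)
  also have "\<dots> = (\<Sum>j. ennreal (?p j * real (j choose Suc q)))"
  proof (rule suminf_cong)
    fix j
    have "(\<Sum>k. ennreal (real (k choose q) * (if k < j then ?p j else 0))) =
        (\<Sum>k<j. ennreal (real (k choose q) * ?p j))"
      by (subst suminf_finite[of "{..<j}"]) auto
    also have "\<dots> = ennreal (\<Sum>k<j. real (k choose q) * ?p j)"
      by (intro sum_ennreal mult_nonneg_nonneg of_nat_0_le_iff p)
    also have "(\<Sum>k<j. real (k choose q) * ?p j) = ?p j * real (j choose Suc q)"
      by (simp only: sum_distrib_right[symmetric] of_nat_sum[symmetric] sum_lessThan_choose mult.commute)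
    finally show "(\<Sum>k. ennreal (real (k choose q) * (if k < j then ?p j else 0))) =
        ennreal (?p j * real (j choose Suc q))" .
  qed
  also have "\<dots> = ennreal ((l * t) ^ Suc q / fact (Suc q))"
    by (intro suminf_ennreal_eq poisson_choose_sums mult_nonneg_nonneg of_nat_0_le_iff p)
  finally show ?thesis .
qed

lemma mult_fact_choose:
  "x * (fact k * (x choose k)) = fact (Suc k) * (x choose Suc k) + k * (fact k * (x choose k))"
proof (cases "k \<le> x")
  case True
  have "fact (Suc k) * (x choose Suc k) = fact k * (Suc k * (x choose Suc k))"
    by (simp add: algebra_simps)
  also have "\<dots> = fact k * ((x - k) * (x choose k))"
    by (metis binomial_absorption binomial_absorb_comp)
  finally show ?thesis
    using True by (simp add: algebra_simps diff_mult_distrib)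
qed (simp add: binomial_eq_0)

lemma power_eq_sum_Stirling_choose:
  "(x :: nat) ^ n = (\<Sum>k\<le>n. Stirling n k * (fact k * (x choose k)))"
proof (induction n)
  case 0
  then show ?case by simp
next
  case (Suc n)
  let ?f = "\<lambda>k. fact k * (x choose k) :: nat"
  have "x ^ Suc n = (\<Sum>k\<le>n. Stirling n k * (x * ?f k))"
    by (simp add: Suc sum_distrib_left algebra_simps)
  also have "\<dots> = (\<Sum>k\<le>n. Stirling n k * ?f (Suc k)) + (\<Sum>k\<le>n. Stirling n k * (k * ?f k))"
    by (simp add: mult_fact_choose algebra_simps sum.distrib)
  also have "(\<Sum>k\<le>n. Stirling n k * (k * ?f k)) = (\<Sum>k\<le>n. Suc k * Stirling n (Suc k) * ?f (Suc k))"
  proof (cases n)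
    case (Suc n')
    have "(\<Sum>k\<le>n. Stirling n k * (k * ?f k)) = (\<Sum>k\<le>n'. Stirling n (Suc k) * (Suc k * ?f (Suc k)))"
      unfolding Suc by (subst sum.atMost_Suc_shift) simp
    also have "\<dots> = (\<Sum>k\<le>n. Suc k * Stirling n (Suc k) * ?f (Suc k))"
      unfolding Suc by (simp add: algebra_simps)
    finally show ?thesis .
  qed simp
  also have "(\<Sum>k\<le>n. Stirling n k * ?f (Suc k)) + \<dots> = (\<Sum>k\<le>n. Stirling (Suc n) (Suc k) * ?f (Suc k))"
    by (simp add: sum.distrib[symmetric] algebra_simps)
  also have "\<dots> = (\<Sum>k\<le>Suc n. Stirling (Suc n) k * ?f k)"
    by (subst sum.atMost_Suc_shift) simp
  finally show ?case .
qed

lemma real_power_eq_sum_Stirling_choose: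
  assumes "1 \<le> m"
  shows "real x ^ m = (\<Sum>k = 1..m. real (Stirling m k) * fact k * real (x choose k))"
proof -
  have "real x ^ m = real (\<Sum>k\<le>m. Stirling m k * (fact k * (x choose k)))"
    by (simp only: of_nat_power[symmetric] power_eq_sum_Stirling_choose)
  also have "\<dots> = (\<Sum>k\<le>m. real (Stirling m k) * fact k * real (x choose k))"
    by (simp add: mult.assoc)
  also have "{..m} = insert 0 {1..m}"
    by auto
  finally show ?thesis
    using assms by (cases m) simp_all
qed

lemma sum_card_lessThan_choose:
  fixes S :: "nat set"
  assumes "finite S"
  shows "(\<Sum>n\<in>S. card (S \<inter> {..<n}) choose q) = card S choose Suc q"
  using assms
proof (induction S rule: finite_linorder_max_induct)
  case empty
  then show ?case by simp
next
  case (insert b A)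
  have "b \<notin> A"
    using insert.hyps by auto
  then have "(\<Sum>n\<in>insert b A. card (insert b A \<inter> {..<n}) choose q) =
      (card (insert b A \<inter> {..<b}) choose q) + (\<Sum>n\<in>A. card (insert b A \<inter> {..<n}) choose q)"
    using insert.hyps by simp
  also have "insert b A \<inter> {..<b} = A"
    using insert.hyps by auto
  also have "(\<Sum>n\<in>A. card (insert b A \<inter> {..<n}) choose q) = (\<Sum>n\<in>A. card (A \<inter> {..<n}) choose q)"
    using insert.hyps by (intro sum.cong refl arg_cong2[where f="(choose)"] arg_cong[where f=card]) auto
  also have "\<dots> = card A choose Suc q"
    by (rule insert.IH)
  finally show ?case
    using insert.hyps \<open>b \<notin> A\<close> by simp
qed

lemma card_subsets_insert_subset:
  fixes S :: "nat set"
  assumes "\<forall>x\<in>S. 1 \<le> x"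
  shows "card {B. B \<subseteq> {1..k} \<and> card B = q \<and> insert (Suc k) B \<subseteq> S} =
    (if Suc k \<in> S then card (S \<inter> {..<Suc k}) choose q else 0)"
proof (cases "Suc k \<in> S")
  case True
  have "card {B. B \<subseteq> {1..k} \<and> card B = q \<and> insert (Suc k) B \<subseteq> S} =
      card {B. B \<subseteq> S \<inter> {..<Suc k} \<and> card B = q}"
    using True assms by (intro arg_cong[where f=card]) (auto; force)
  also have "\<dots> = card (S \<inter> {..<Suc k}) choose q"
    by (rule n_subsets) simp
  finally show ?thesis
    using True by simp
qed simp

section \<open>Clusters and their last points\<close>

lemma is_cluster_unique_start:
  assumes "is_cluster x eps j k" and "is_cluster x eps j' k"
  shows "j = j'"
proof -
  have False if "is_cluster x eps i k" "is_cluster x eps i' k" "i < i'" for i i'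
  proof -
    have "i \<le> i' - 1" "i' - 1 < k" "i' \<noteq> 1"
      using that unfolding is_cluster_def by auto
    then have "x (i' - 1 + 1) - x (i' - 1) \<le> eps"
      using that(1) unfolding is_cluster_def by blast
    moreover have "eps < x i' - x (i' - 1)"
      using that(2) \<open>i' \<noteq> 1\<close> unfolding is_cluster_def by blast
    ultimately show False
      using \<open>i < i'\<close> by simp
  qed
  then show ?thesis
    using assms by (metis linorder_neqE_nat)
qed

lemma is_cluster_exists:
  assumes "1 \<le> k" and "eps < x (k + 1) - x k"
  shows "\<exists>j. is_cluster x eps j k"
proof -
  let ?C = "{j. 1 \<le> j \<and> j \<le> k \<and> (j = 1 \<or> eps < x j - x (j - 1))}"
  have fin: "finite ?C"
    by (rule finite_subset[of _ "{..k}"]) auto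
  have j: "Max ?C \<in> ?C"
    using fin assms(1) by (intro Max_in) auto
  have j_max: "\<And>i. i \<in> ?C \<Longrightarrow> i \<le> Max ?C"
    using fin by simp
  have "x (l + 1) - x l \<le> eps" if "Max ?C \<le> l" "l < k" for l
  proof (rule ccontr)
    assume "\<not> x (l + 1) - x l \<le> eps"
    then have "l + 1 \<in> ?C"
      using that j by auto
    then have "l + 1 \<le> Max ?C"
      by (rule j_max)
    with that show False
      by simp
  qed
  then have "is_cluster x eps (Max ?C) k"
    unfolding is_cluster_def using j assms by auto
  then show ?thesis ..
qed

text \<open>A complete cluster is determined by its last point.\<close>
lemma beta0_eq_card_gaps:
  "beta0 x eps L = card {k. 1 \<le> k \<and> eps < x (k + 1) - x k \<and> x k + eps \<le> L}"
proof -
  have "bij_betw snd {(j, k). is_cluster x eps j k \<and> x k + eps \<le> L}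
      {k. 1 \<le> k \<and> eps < x (k + 1) - x k \<and> x k + eps \<le> L}"
  proof (rule bij_betwI')
    fix p q
    assume "p \<in> {(j, k). is_cluster x eps j k \<and> x k + eps \<le> L}"
      and "q \<in> {(j, k). is_cluster x eps j k \<and> x k + eps \<le> L}"
    then show "(snd p = snd q) = (p = q)"
      using is_cluster_unique_start[of x eps "fst p" "snd p" "fst q"] by (cases p; cases q) auto
  next
    fix k assume "k \<in> {k. 1 \<le> k \<and> eps < x (k + 1) - x k \<and> x k + eps \<le> L}"
    then show "\<exists>p\<in>{(j, k). is_cluster x eps j k \<and> x k + eps \<le> L}. k = snd p"
      using is_cluster_exists[of k eps x] by force
  qed (auto simp: is_cluster_def)
  then show ?thesis
    unfolding beta0_def by (rule bij_betw_same_card)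
qed

section \<open>Factorial moments of the number of clusters\<close>

lemma suminf_indicator_eq_emeasure_count_space:
  "(\<Sum>k. indicator A k :: ennreal) = emeasure (count_space UNIV) (A :: nat set)"
  by (simp add: nn_integral_count_space_nat[symmetric])

lemma real_card_eq_enn2real_suminf_indicator:
  "real (card (A :: nat set)) = enn2real (\<Sum>k. indicator A k)"
  by (cases "finite A") (simp_all add: suminf_indicator_eq_emeasure_count_space emeasure_count_space)

abbreviation subsets_of_card :: "'a set \<Rightarrow> nat \<Rightarrow> 'a set set" where
  "subsets_of_card A q \<equiv> {B. B \<subseteq> A \<and> card B = q}"

lemma finite_subsets_of_card: "finite A \<Longrightarrow> finite (subsets_of_card A q)"
  by (rule finite_subset[of _ "Pow A"]) auto

locale exponential_clusters = exponential_gaps +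
  fixes eps L :: real
  assumes eps_nonneg: "0 \<le> eps"
begin

text \<open>The indices k for which X k = T 0 + ... + T (k - 1) is the last point of a complete
  cluster in [0, L].\<close>
definition cluster_ends :: "'a \<Rightarrow> nat set" where
  "cluster_ends \<omega> = {k. 1 \<le> k \<and> eps < T k \<omega> \<and> (\<Sum>i<k. T i \<omega>) \<le> L - eps}"

lemma beta0_eq_card_cluster_ends: "beta0 (\<lambda>n. \<Sum>i<n. T i \<omega>) eps L = card (cluster_ends \<omega>)"
  unfolding beta0_eq_card_gaps cluster_ends_def by (simp add: algebra_simps)

lemma pred_cluster_ends [measurable]: "Measurable.pred M (\<lambda>\<omega>. k \<in> cluster_ends \<omega>)"
  unfolding cluster_ends_def by measurable

abbreviation clusters_end_at :: "nat set \<Rightarrow> 'a set" where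
  "clusters_end_at B \<equiv> {\<omega> \<in> space M. B \<subseteq> cluster_ends \<omega>}"

lemma sets_clusters_end_at [measurable]: "finite B \<Longrightarrow> clusters_end_at B \<in> sets M"
  unfolding subset_eq by measurable

text \<open>Almost surely the gaps are positive, so the constraint at the largest index Suc k implies
  the constraints on the partial sums at the smaller indices in B.\<close>
lemma emeasure_clusters_end_at:
  assumes B: "B \<subseteq> {1..k}" "card B = q"
  shows "emeasure M (clusters_end_at (insert (Suc k) B)) =
    ennreal (exp (- lam * eps) ^ Suc q * erlang_CDF k lam (L - real (Suc q) * eps))"
proof -
  have fin: "finite B"
    using B finite_subset by blast
  have "Suc k \<notin> B"
    using B by auto
  let ?F = "{\<omega> \<in> space M. (\<forall>b\<in>insert (Suc k) B. eps < T b \<omega>) \<and> (\<Sum>i\<in>{..<Suc k}. T i \<omega>) \<le> L - eps}"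
  have "AE \<omega> in M. insert (Suc k) B \<subseteq> cluster_ends \<omega> \<longleftrightarrow> \<omega> \<in> ?F"
    using AE_T_pos AE_space
  proof eventually_elim
    case (elim \<omega>)
    have "(\<Sum>i<b. T i \<omega>) \<le> (\<Sum>i<Suc k. T i \<omega>)" if "b \<in> insert (Suc k) B" for b
      using that B elim(1) by (intro sum_mono2) (auto simp: less_imp_le)
    then show ?case
      using B elim(2) unfolding cluster_ends_def by fastforce
  qed
  then have "emeasure M (clusters_end_at (insert (Suc k) B)) = emeasure M ?F"
    using fin by (intro emeasure_eq_AE) auto
  also have "\<dots> = ennreal (prob ?F)"
    by (simp add: emeasure_eq_measure)
  also have "prob ?F = exp (- lam * eps) ^ card (insert (Suc k) B) *
      prob {\<omega> \<in> space M. (\<Sum>i\<in>{..<Suc k}. T i \<omega>) \<le> L - eps - real (card (insert (Suc k) B \<inter> {..<Suc k})) * eps}"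
    using fin by (intro prob_gaps_gt_sum_le[OF eps_nonneg]) auto
  also have "card (insert (Suc k) B) = Suc q"
    using B fin \<open>Suc k \<notin> B\<close> by simp
  also have "insert (Suc k) B \<inter> {..<Suc k} = B"
    using B by auto
  also have "prob {\<omega> \<in> space M. (\<Sum>i\<in>{..<Suc k}. T i \<omega>) \<le> L - eps - real (card B) * eps} =
      erlang_CDF k lam (L - eps - real (card B) * eps)"
    by (rule prob_sum_T_le)
  finally show ?thesis
    using B by (simp add: algebra_simps)
qed

text \<open>The number of (q + 1)-element subsets of cluster_ends \<omega>, grouped by their largest
  element Suc k.\<close>
definition subsets_count :: "nat \<Rightarrow> 'a \<Rightarrow> ennreal" where
  "subsets_count q \<omega> = (\<Sum>k. of_nat (card {B. B \<subseteq> {1..k} \<and> card B = q \<and> insert (Suc k) B \<subseteq> cluster_ends \<omega>}))"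

lemma subsets_count_eq_suminf_indicator:
  assumes "\<omega> \<in> space M"
  shows "subsets_count q \<omega> =
    (\<Sum>k. \<Sum>B\<in>subsets_of_card {1..k} q. indicator (clusters_end_at (insert (Suc k) B)) \<omega>)"
  unfolding subsets_count_def
proof (rule suminf_cong)
  fix k
  have "(\<Sum>B\<in>subsets_of_card {1..k} q. indicator (clusters_end_at (insert (Suc k) B)) \<omega> :: ennreal) =
      (\<Sum>B\<in>subsets_of_card {1..k} q. if insert (Suc k) B \<subseteq> cluster_ends \<omega> then 1 else 0)"
    using assms by (intro sum.cong) (auto simp: indicator_def)
  also have "\<dots> = of_nat (card {B \<in> subsets_of_card {1..k} q. insert (Suc k) B \<subseteq> cluster_ends \<omega>})"
    by (simp add: sum.inter_filter[symmetric] finite_subsets_of_card)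
  finally show "of_nat (card {B. B \<subseteq> {1..k} \<and> card B = q \<and> insert (Suc k) B \<subseteq> cluster_ends \<omega>}) =
      (\<Sum>B\<in>subsets_of_card {1..k} q. indicator (clusters_end_at (insert (Suc k) B)) \<omega> :: ennreal)"
    by (simp add: conj_assoc)
qed

lemma borel_measurable_sum_indicator_subsets [measurable]:
  "(\<lambda>\<omega>. \<Sum>B\<in>subsets_of_card {1..k} q.
      indicator (clusters_end_at (insert (Suc k) B)) \<omega> :: ennreal) \<in> borel_measurable M"
  by (intro borel_measurable_sum borel_measurable_indicator sets_clusters_end_at)
     (auto intro: finite_subset)

lemma borel_measurable_subsets_count [measurable]: "subsets_count q \<in> borel_measurable M"
proof -
  have "(\<lambda>\<omega>. \<Sum>k. \<Sum>B\<in>subsets_of_card {1..k} q.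
      indicator (clusters_end_at (insert (Suc k) B)) \<omega> :: ennreal) \<in> borel_measurable M"
    by measurable
  then show ?thesis
    by (rule measurable_cong[THEN iffD1, rotated]) (simp add: subsets_count_eq_suminf_indicator)
qed

lemma nn_integral_subsets_count_eq_suminf:
  "(\<integral>\<^sup>+\<omega>. subsets_count q \<omega> \<partial>M) =
    (\<Sum>k. \<Sum>B\<in>subsets_of_card {1..k} q. emeasure M (clusters_end_at (insert (Suc k) B)))"
proof -
  have "(\<integral>\<^sup>+\<omega>. subsets_count q \<omega> \<partial>M) = (\<integral>\<^sup>+\<omega>. (\<Sum>k. \<Sum>B\<in>subsets_of_card {1..k} q.
      indicator (clusters_end_at (insert (Suc k) B)) \<omega>) \<partial>M)"
    by (intro nn_integral_cong) (simp add: subsets_count_eq_suminf_indicator)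
  also have "\<dots> = (\<Sum>k. \<integral>\<^sup>+\<omega>. (\<Sum>B\<in>subsets_of_card {1..k} q.
      indicator (clusters_end_at (insert (Suc k) B)) \<omega>) \<partial>M)"
    by (rule nn_integral_suminf) measurable
  also have "\<dots> = (\<Sum>k. \<Sum>B\<in>subsets_of_card {1..k} q. emeasure M (clusters_end_at (insert (Suc k) B)))"
  proof (intro suminf_cong)
    fix k
    have E: "clusters_end_at (insert (Suc k) B) \<in> sets M" if "B \<in> subsets_of_card {1..k} q" for B
      using that by (intro sets_clusters_end_at) (auto intro: finite_subset)
    show "(\<integral>\<^sup>+\<omega>. (\<Sum>B\<in>subsets_of_card {1..k} q. indicator (clusters_end_at (insert (Suc k) B)) \<omega>) \<partial>M) =
        (\<Sum>B\<in>subsets_of_card {1..k} q. emeasure M (clusters_end_at (insert (Suc k) B)))"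
      by (subst nn_integral_sum)
         (auto simp del: insert_subset intro!: sum.cong nn_integral_indicator borel_measurable_indicator E)
  qed
  finally show ?thesis .
qed

lemma nn_integral_subsets_count:
  "(\<integral>\<^sup>+\<omega>. subsets_count q \<omega> \<partial>M) =
    ennreal ((lam * exp (- lam * eps) * max 0 (L - real (Suc q) * eps)) ^ Suc q / fact (Suc q))"
proof -
  let ?t = "L - real (Suc q) * eps"
  have "(\<integral>\<^sup>+\<omega>. subsets_count q \<omega> \<partial>M) =
      (\<Sum>k. ennreal (real (k choose q) * erlang_CDF k lam ?t) * ennreal (exp (- lam * eps) ^ Suc q))"
    unfolding nn_integral_subsets_count_eq_suminf
  proof (rule suminf_cong)
    fix k
    have "(\<Sum>B\<in>subsets_of_card {1..k} q. emeasure M (clusters_end_at (insert (Suc k) B))) =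
        (\<Sum>B\<in>subsets_of_card {1..k} q. ennreal (exp (- lam * eps) ^ Suc q * erlang_CDF k lam ?t))"
      by (intro sum.cong refl emeasure_clusters_end_at) auto
    also have "\<dots> = ennreal (real (k choose q) * erlang_CDF k lam ?t) * ennreal (exp (- lam * eps) ^ Suc q)"
      by (simp add: n_subsets ennreal_of_nat_eq_real_of_nat erlang_CDF_nonneg[OF lam_pos]
            ennreal_mult'[symmetric] mult_ac)
    finally show "(\<Sum>B\<in>subsets_of_card {1..k} q. emeasure M (clusters_end_at (insert (Suc k) B))) =
        ennreal (real (k choose q) * erlang_CDF k lam ?t) * ennreal (exp (- lam * eps) ^ Suc q)" .
  qed
  also have "\<dots> = (\<Sum>k. ennreal (real (k choose q) * erlang_CDF k lam ?t)) * ennreal (exp (- lam * eps) ^ Suc q)"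
    by (rule ennreal_suminf_multc)
  also have "\<dots> = ennreal ((lam * exp (- lam * eps) * max 0 ?t) ^ Suc q / fact (Suc q))"
  proof (cases "0 \<le> ?t")
    case True
    show ?thesis
      unfolding suminf_choose_erlang_CDF[OF lam_pos True] using True lam_pos
      by (simp add: ennreal_mult'[symmetric] power_mult_distrib mult_ac)
  next
    case False
    then show ?thesis
      by (simp add: erlang_CDF_def)
  qed
  finally show ?thesis .
qed

lemma cluster_ends_eq_image_Suc: "cluster_ends \<omega> = Suc ` {k. Suc k \<in> cluster_ends \<omega>}"
proof (intro equalityI subsetI)
  fix n
  assume n: "n \<in> cluster_ends \<omega>"
  then have "n = Suc (n - 1)"
    by (simp add: cluster_ends_def)
  with n show "n \<in> Suc ` {k. Suc k \<in> cluster_ends \<omega>}"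
    by (metis (mono_tags) image_eqI mem_Collect_eq)
qed auto

lemma subsets_count_eq_suminf_choose:
  "subsets_count q \<omega> =
    (\<Sum>k. of_nat (if Suc k \<in> cluster_ends \<omega> then card (cluster_ends \<omega> \<inter> {..<Suc k}) choose q else 0))"
proof -
  have "\<forall>n\<in>cluster_ends \<omega>. 1 \<le> n"
    by (simp add: cluster_ends_def)
  then show ?thesis
    unfolding subsets_count_def by (simp only: card_subsets_insert_subset)
qed

lemma subsets_count_finite:
  assumes fin: "finite (cluster_ends \<omega>)"
  shows "subsets_count q \<omega> = of_nat (card (cluster_ends \<omega>) choose Suc q)"
proof -
  let ?S = "cluster_ends \<omega>"
  let ?N = "{k. Suc k \<in> ?S}"
  have "finite ?N"
    using fin by (subst (asm) cluster_ends_eq_image_Suc) (simp add: finite_image_iff)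
  then have "subsets_count q \<omega> = (\<Sum>k\<in>?N. of_nat (card (?S \<inter> {..<Suc k}) choose q))"
    unfolding subsets_count_eq_suminf_choose by (subst suminf_finite[of ?N]) auto
  also have "\<dots> = (\<Sum>n\<in>Suc ` ?N. of_nat (card (?S \<inter> {..<n}) choose q))"
    by (simp add: sum.reindex)
  also have "\<dots> = of_nat (\<Sum>n\<in>?S. card (?S \<inter> {..<n}) choose q)"
    by (simp flip: cluster_ends_eq_image_Suc)
  also have "\<dots> = of_nat (card ?S choose Suc q)"
    by (simp add: sum_card_lessThan_choose fin)
  finally show ?thesis .
qed

lemma subsets_count_0_infinite:
  assumes "infinite (cluster_ends \<omega>)"
  shows "subsets_count 0 \<omega> = \<infinity>"
proof -
  have "infinite {k. Suc k \<in> cluster_ends \<omega>}"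
    using assms by (subst (asm) cluster_ends_eq_image_Suc) auto
  moreover have "(\<lambda>k. of_nat (if Suc k \<in> cluster_ends \<omega> then card (cluster_ends \<omega> \<inter> {..<Suc k}) choose 0 else 0))
      = (indicator {k. Suc k \<in> cluster_ends \<omega>} :: nat \<Rightarrow> ennreal)"
    by (auto simp: indicator_def)
  ultimately show ?thesis
    unfolding subsets_count_eq_suminf_choose by (simp add: suminf_indicator_eq_emeasure_count_space)
qed

lemma AE_finite_cluster_ends: "AE \<omega> in M. finite (cluster_ends \<omega>)"
proof -
  have "(\<integral>\<^sup>+\<omega>. subsets_count 0 \<omega> \<partial>M) \<noteq> \<infinity>"
    by (simp add: nn_integral_subsets_count)
  then have "AE \<omega> in M. subsets_count 0 \<omega> \<noteq> \<infinity>"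
    by (rule nn_integral_PInf_AE[rotated]) simp
  then show ?thesis
    by eventually_elim (use subsets_count_0_infinite in blast)
qed

lemma borel_measurable_card_cluster_ends: "(\<lambda>\<omega>. real (card (cluster_ends \<omega>))) \<in> borel_measurable M"
  unfolding real_card_eq_enn2real_suminf_indicator indicator_def by measurable

lemma expectation_card_cluster_ends_power:
  assumes "1 \<le> m"
  shows "expectation (\<lambda>\<omega>. real (card (cluster_ends \<omega>)) ^ m) =
    (\<Sum>r = 1..m. real (Stirling m r) * (lam * exp (- lam * eps) * max 0 (L - real r * eps)) ^ r)"
proof -
  define c where "c r = real (Stirling m r) * fact r" for r
  define \<mu> where "\<mu> r = (lam * exp (- lam * eps) * max 0 (L - real r * eps)) ^ r / fact r" for r
  have c: "0 \<le> c r" and \<mu>: "0 \<le> \<mu> r" for r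
    using lam_pos by (simp_all add: c_def \<mu>_def)
  have "AE \<omega> in M. ennreal (real (card (cluster_ends \<omega>)) ^ m) = (\<Sum>q<m. ennreal (c (Suc q)) * subsets_count q \<omega>)"
    using AE_finite_cluster_ends
  proof eventually_elim
    case (elim \<omega>)
    have "real (card (cluster_ends \<omega>)) ^ m = (\<Sum>q<m. c (Suc q) * real (card (cluster_ends \<omega>) choose Suc q))"
      unfolding real_power_eq_sum_Stirling_choose[OF assms] c_def by (simp add: sum.atLeast1_atMost_eq)
    then show ?case
      using c by (simp add: sum_ennreal[symmetric] subsets_count_finite[OF elim] ennreal_mult' ennreal_of_nat_eq_real_of_nat)
  qed
  then have "(\<integral>\<^sup>+\<omega>. ennreal (real (card (cluster_ends \<omega>)) ^ m) \<partial>M) = (\<Sum>q<m. ennreal (c (Suc q)) * ennreal (\<mu> (Suc q)))"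
    by (simp add: nn_integral_cong_AE nn_integral_sum nn_integral_cmult nn_integral_subsets_count \<mu>_def)
  also have "\<dots> = ennreal (\<Sum>r = 1..m. c r * \<mu> r)"
    using c \<mu> by (simp add: sum.atLeast1_atMost_eq sum_ennreal ennreal_mult'[symmetric])
  moreover have "0 \<le> (\<Sum>r = 1..m. c r * \<mu> r)"
    using c \<mu> by (simp add: sum_nonneg)
  ultimately have "expectation (\<lambda>\<omega>. real (card (cluster_ends \<omega>)) ^ m) = (\<Sum>r = 1..m. c r * \<mu> r)"
    by (subst integral_eq_nn_integral) (auto intro: borel_measurable_card_cluster_ends)
  then show ?thesis
    by (simp add: c_def \<mu>_def)
qed

end

theorem corollary4:
  fixes M :: "'a measure" and X :: "nat \<Rightarrow> 'a \<Rightarrow> real"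
    and lam eps L :: real and m :: nat
  assumes "prob_space M"
    and "poisson_points M lam X"
    and "lam > 0" and "eps > 0" and "L > 0" and "m \<ge> 1"
  shows "prob_space.expectation M (\<lambda>\<omega>. (real (beta0 (\<lambda>n. X n \<omega>) eps L)) ^ m) =
    (\<Sum>k = 1..m. real (Stirling m k) * (L / eps - real k) ^ k
        * (lam * eps * exp (- eps * lam)) ^ k
        * (if L / eps > real k then 1 else 0))"
proof -
  obtain T where "prob_space.indep_vars M (\<lambda>_. borel) T UNIV"
    and "\<And>i. distributed M lborel (T i) (exponential_density lam)"
    and X: "\<And>n \<omega>. X n \<omega> = (\<Sum>i<n. T i \<omega>)"
    using assms(2) unfolding poisson_points_def by blast
  then interpret exponential_clusters M T lam eps L
    using assms(1,3,4) by (intro exponential_clusters.intro exponential_gaps.intro exponential_clusters_axioms.intro exponential_gaps_axioms.intro) simp_all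
  have "(lam * exp (- lam * eps) * max 0 (L - real k * eps)) ^ k =
      (L / eps - real k) ^ k * (lam * eps * exp (- eps * lam)) ^ k * (if L / eps > real k then 1 else 0)"
    if "k \<in> {1..m}" for k
  proof -
    have "L - real k * eps = (L / eps - real k) * eps" and "L / eps > real k \<longleftrightarrow> L - real k * eps > 0"
      using \<open>eps > 0\<close> by (simp_all add: field_simps)
    then show ?thesis
      using that by (cases "L - real k * eps > 0") (simp_all add: power_mult_distrib mult_ac)
  qed
  then show ?thesis
    using expectation_card_cluster_ends_power[OF \<open>m \<ge> 1\<close>]
    by (simp add: X beta0_eq_card_cluster_ends mult.assoc)
qed

end
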